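(* If $A$ is a finite set of relatively prime positive integers, then there exists an $\mathcal{N}$-set $K\subseteq\mathbb{R}$ such that $A=(K-K)\cap\mathbb{N}$.
   Context: $\mathbb{N}$ denotes the set of positive integers. $K-K=\{x-y : x,y\in K\}$. A set of integers is relatively prime if it is nonempty and its elements have no common factor greater than $1$. An $\mathcal{N}$-set in $\mathbb{R}^n$ is a compact set $K\subseteq\mathbb{R}^n$ such that for every $x\in\mathbb{R}^n$ there exists $y\in K$ with $x-y\in\mathbb{Z}^n$. *)

theory Defs
  imports "HOL-Analysis.Analysis"
begin

definition N_set :: "real set \<Rightarrow> bool" where
  "N_set K \<longleftrightarrow> compact K \<and> (\<forall>x::real. \<exists>y\<in>K. x - y \<in> \<int>)"

definition rel_prime_set :: "nat set \<Rightarrow> bool" where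
  "rel_prime_set A \<longleftrightarrow> A \<noteq> {} \<and> (\<forall>d::nat. (\<forall>a\<in>A. d dvd a) \<longrightarrow> d = 1)"

definition diff_set :: "real set \<Rightarrow> real set" where
  "diff_set K = {x - y | x y. x \<in> K \<and> y \<in> K}"

end

theory Submission
  imports Defs "HOL-Computational_Algebra.Group_Closure"
begin

(* Let ds = [d_0, ..., d_(L-1)] be integers with d_0 + ... + d_(L-1) = -1 and let
   h_j = d_0 + ... + d_(j-1).  The "staircase" K is the union of the intervals
   [j/L, (j+1)/L] + h_j for j < L: it projects onto [0,1] modulo Z, so it is an N-set.
   Two points of K differing by an integer have equal positions in [0,1] (then they lie on
   the same or on adjacent steps, and differ by 0 or by -d_j, d_j), or positions 1 and 0 (then
   they lie on the last and the first step and, since the total sum is -1, differ by -d_(L-1)).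
   Conversely every -d_j is realised at a step boundary.  Hence the positive integers in K - K
   are exactly the |d_j|.
   Given relatively prime A, Bezout (in the form 1 \<in> group_closure A) yields a list of signed
   elements of A summing to 1; negating it and appending a, -a for every a \<in> A gives ds with
   sum -1 and {|d_j|} = A, and the staircase of ds is the required N-set. *)

section \<open>Staircase sets\<close>

definition stair_level :: "int list \<Rightarrow> nat \<Rightarrow> int" where
  "stair_level ds j = sum_list (take j ds)"

definition stair_step :: "int list \<Rightarrow> nat \<Rightarrow> real set" where
  "stair_step ds j =
     {real j / real (length ds) + of_int (stair_level ds j) ..
      real (Suc j) / real (length ds) + of_int (stair_level ds j)}"

definition staircase :: "int list \<Rightarrow> real set" where
  "staircase ds = (\<Union>j<length ds. stair_step ds j)"

lemma stair_level_0 [simp]: "stair_level ds 0 = 0"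
  by (simp add: stair_level_def)

lemma stair_level_Suc: "j < length ds \<Longrightarrow> stair_level ds (Suc j) = stair_level ds j + ds ! j"
  by (simp add: stair_level_def take_Suc_conv_app_nth)

text \<open>With total sum -1, climbing the last step leads from the top of the staircase back to
  level -1, which makes the staircase wrap around modulo 1.\<close>
lemma stair_level_last:
  assumes "sum_list ds = -1" "ds \<noteq> []"
  shows "stair_level ds (length ds - 1) + ds ! (length ds - 1) = -1"
  using stair_level_Suc[of "length ds - 1" ds] assms by (simp add: stair_level_def)

lemma staircase_memI:
  assumes "j < length ds" "real j / real (length ds) \<le> t" "t \<le> real (Suc j) / real (length ds)"
  shows "t + of_int (stair_level ds j) \<in> staircase ds"
  using assms unfolding staircase_def stair_step_def by (intro UN_I[of j]) auto

lemma staircase_compact: "compact (staircase ds)"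
  unfolding staircase_def stair_step_def by (intro compact_UN) auto

text \<open>Every real number is congruent modulo 1 to a point of the staircase: its fractional
  part lies in one of the subintervals [j/L, (j+1)/L].\<close>
lemma staircase_meets_cosets:
  assumes "ds \<noteq> []"
  shows "\<exists>y\<in>staircase ds. x - y \<in> \<int>"
proof -
  define L where "L = length ds"
  have L: "L > 0" using assms by (simp add: L_def)
  define f where "f = x - of_int \<lfloor>x\<rfloor>"
  have f: "0 \<le> f" "f < 1" unfolding f_def by linarith+
  define j where "j = nat \<lfloor>f * real L\<rfloor>"
  have "0 \<le> \<lfloor>f * real L\<rfloor>" using f by simp
  then have j_le: "real j \<le> f * real L" and j_gt: "f * real L < real j + 1"
    unfolding j_def by linarith+
  have "f * real L < real L" using f(2) L by simp
  then have "j < L" using j_le by linarith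
  moreover have "real j / real L \<le> f" "f \<le> real (Suc j) / real L"
    using j_le j_gt L by (simp_all add: divide_simps mult.commute)
  ultimately have "f + of_int (stair_level ds j) \<in> staircase ds"
    using staircase_memI unfolding L_def by blast
  moreover have "x - (f + of_int (stair_level ds j)) = of_int (\<lfloor>x\<rfloor> - stair_level ds j)"
    unfolding f_def by simp
  ultimately show ?thesis by (metis Ints_of_int)
qed

lemma staircase_N_set: "ds \<noteq> [] \<Longrightarrow> N_set (staircase ds)"
  unfolding N_set_def using staircase_compact staircase_meets_cosets by blast

lemma stair_step_position:
  assumes "x \<in> stair_step ds j" "j < length ds"
  shows "real j / real (length ds) \<le> x - of_int (stair_level ds j)"
    and "x - of_int (stair_level ds j) \<le> real (Suc j) / real (length ds)"
    and "0 \<le> x - of_int (stair_level ds j)"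
    and "x - of_int (stair_level ds j) \<le> 1"
proof -
  show lo: "real j / real (length ds) \<le> x - of_int (stair_level ds j)"
    and hi: "x - of_int (stair_level ds j) \<le> real (Suc j) / real (length ds)"
    using assms(1) unfolding stair_step_def by auto
  have "0 \<le> real j / real (length ds)" by simp
  then show "0 \<le> x - of_int (stair_level ds j)" using lo by linarith
  have "real (Suc j) / real (length ds) \<le> 1" using assms(2) by (simp add: divide_simps)
  then show "x - of_int (stair_level ds j) \<le> 1" using hi by linarith
qed

lemma stair_steps_overlap:
  assumes "real j / real L \<le> real (Suc k) / real L" "real k / real L \<le> real (Suc j) / real L"
    and "L > 0"
  shows "j = k \<or> k = Suc j \<or> j = Suc k"
proof -
  have "real j \<le> real (Suc k)" "real k \<le> real (Suc j)"
    using assms by (simp_all add: divide_simps)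
  then show ?thesis by linarith
qed

text \<open>Integer differences within the staircase, in the case where the first point has the
  higher position: the positions agree (same or adjacent steps) or are 1 and 0 (last and
  first step).\<close>
lemma staircase_int_diff_ordered:
  assumes sum: "sum_list ds = -1"
    and x: "x \<in> stair_step ds j" "j < length ds"
    and y: "y \<in> stair_step ds k" "k < length ds"
    and xy: "x - y = of_int z"
    and ordered: "y - of_int (stair_level ds k) \<le> x - of_int (stair_level ds j)"
  shows "z = 0 \<or> (\<exists>d\<in>set ds. \<bar>z\<bar> = \<bar>d\<bar>)"
proof -
  define L where "L = length ds"
  have L: "L > 0" using x(2) unfolding L_def by linarith
  note px = stair_step_position[OF x, folded L_def]
  note py = stair_step_position[OF y, folded L_def]
  define w where "w = z - stair_level ds j + stair_level ds k"
  have w_pos: "(x - of_int (stair_level ds j)) - (y - of_int (stair_level ds k)) = of_int w"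
    unfolding w_def using xy by simp
  have "0 \<le> w" "w \<le> 1" using w_pos ordered px py by linarith+
  then consider "w = 0" | "w = 1" by linarith
  then show ?thesis
  proof cases
    case 1
    then have "real j / real L \<le> real (Suc k) / real L"
      "real k / real L \<le> real (Suc j) / real L"
      using w_pos px py by linarith+
    then consider "j = k" | "k = Suc j" | "j = Suc k" using stair_steps_overlap L by blast
    then show ?thesis
    proof cases
      case 1 then show ?thesis using \<open>w = 0\<close> w_def by simp
    next
      case 2
      then have "z = - ds ! j" "ds ! j \<in> set ds"
        using \<open>w = 0\<close> w_def stair_level_Suc[of j ds] y(2) by simp_all
      then show ?thesis by force
    next
      case 3
      then have "z = ds ! k" "ds ! k \<in> set ds"
        using \<open>w = 0\<close> w_def stair_level_Suc[of k ds] x(2) y(2) by simp_all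
      then show ?thesis by force
    qed
  next
    case 2
    then have "1 \<le> real (Suc j) / real L" "real k / real L \<le> 0"
      using w_pos px py by linarith+
    then have "j = L - 1" "k = 0" using L x(2) by (auto simp: divide_simps L_def)
    then have "z = - ds ! (L - 1)" "ds ! (L - 1) \<in> set ds"
      using 2 w_def stair_level_last[OF sum] L by (auto simp: L_def)
    then show ?thesis by force
  qed
qed

lemma staircase_int_diff:
  assumes sum: "sum_list ds = -1"
    and "x \<in> staircase ds" "y \<in> staircase ds" "x - y = of_int z"
  shows "z = 0 \<or> (\<exists>d\<in>set ds. \<bar>z\<bar> = \<bar>d\<bar>)"
proof -
  obtain j k where x: "x \<in> stair_step ds j" "j < length ds"
    and y: "y \<in> stair_step ds k" "k < length ds"
    using assms(2,3) unfolding staircase_def by blast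
  show ?thesis
  proof (cases "y - of_int (stair_level ds k) \<le> x - of_int (stair_level ds j)")
    case True
    then show ?thesis using staircase_int_diff_ordered[OF sum x y assms(4)] by blast
  next
    case False
    have "y - x = of_int (- z)" using assms(4) by simp
    from staircase_int_diff_ordered[OF sum y x this] False
    have "- z = 0 \<or> (\<exists>d\<in>set ds. \<bar>- z\<bar> = \<bar>d\<bar>)" by linarith
    then show ?thesis by simp
  qed
qed

lemma diff_setI: "x \<in> K \<Longrightarrow> y \<in> K \<Longrightarrow> x - y \<in> diff_set K"
  unfolding diff_set_def by blast

lemma diff_set_uminus: "x \<in> diff_set K \<Longrightarrow> - x \<in> diff_set K"
  unfolding diff_set_def by force

text \<open>Every negated step is a difference in the staircase: at the common boundary of steps
  j and j+1, or, for the last step, between the top end and the origin.\<close>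
lemma staircase_realises_step:
  assumes sum: "sum_list ds = -1" and j: "j < length ds"
  shows "of_int (- ds ! j) \<in> diff_set (staircase ds)"
proof -
  define L where "L = length ds"
  have L: "L > 0" using j unfolding L_def by linarith
  show ?thesis
  proof (cases "Suc j < L")
    case True
    define p where "p = real (Suc j) / real L"
    have "p + of_int (stair_level ds j) \<in> staircase ds"
      "p + of_int (stair_level ds (Suc j)) \<in> staircase ds"
      by (rule staircase_memI; use True j in \<open>simp add: p_def L_def divide_simps\<close>)+
    moreover have "(p + of_int (stair_level ds j)) - (p + of_int (stair_level ds (Suc j)))
        = of_int (- ds ! j)"
      using stair_level_Suc[OF j] by simp
    ultimately show ?thesis by (metis diff_setI)
  next
    case False
    then have last: "j = L - 1" using j by (simp add: L_def)
    have "1 + of_int (stair_level ds j) \<in> staircase ds"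
      using last j L staircase_memI[of j ds 1] by (simp add: L_def divide_simps)
    moreover have "0 \<in> staircase ds"
      using L staircase_memI[of 0 ds 0] by (simp add: L_def)
    moreover have "(1 + of_int (stair_level ds j)) - 0 = (of_int (- ds ! j) :: real)"
      using stair_level_last[OF sum] last L by (simp add: L_def flip: of_int_add)
    ultimately show ?thesis by (metis diff_setI)
  qed
qed

lemma staircase_positive_diffs:
  assumes sum: "sum_list ds = -1" and "n > 0"
  shows "real n \<in> diff_set (staircase ds) \<longleftrightarrow> int n \<in> abs ` set ds"
proof
  assume "real n \<in> diff_set (staircase ds)"
  then obtain x y where "x \<in> staircase ds" "y \<in> staircase ds" "x - y = of_int (int n)"
    unfolding diff_set_def by auto
  then have "int n = 0 \<or> (\<exists>d\<in>set ds. \<bar>int n\<bar> = \<bar>d\<bar>)"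
    by (rule staircase_int_diff[OF sum])
  then show "int n \<in> abs ` set ds"
    using \<open>n > 0\<close> by force
next
  assume "int n \<in> abs ` set ds"
  then obtain j where j: "j < length ds" "int n = \<bar>ds ! j\<bar>"
    by (metis imageE in_set_conv_nth)
  have n_eq: "real n = of_int \<bar>ds ! j\<bar>"
    using j(2) by (metis of_int_of_nat_eq)
  have realised: "of_int (- ds ! j) \<in> diff_set (staircase ds)"
    using staircase_realises_step[OF sum j(1)] .
  show "real n \<in> diff_set (staircase ds)"
  proof (cases "ds ! j < 0")
    case True
    then show ?thesis using realised n_eq by simp
  next
    case False
    then show ?thesis using diff_set_uminus[OF realised] n_eq by simp
  qed
qed

section \<open>Step lists from relatively prime sets\<close>

lemma sum_list_negate: "sum_list (map uminus xs) = - sum_list (xs :: 'a :: ab_group_add list)"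
  by (induction xs) auto

lemma group_closure_signed_sum:
  fixes s :: int
  assumes "s \<in> group_closure S"
  shows "\<exists>ds. sum_list ds = s \<and> abs ` set ds \<subseteq> abs ` S"
  using assms
proof induction
  case (base s)
  show ?case
  proof (cases "s = 0")
    case True
    then show ?thesis by (intro exI[of _ "[]"]) simp
  next
    case False
    then show ?thesis using base by (intro exI[of _ "[s]"]) auto
  qed
next
  case (diff s t)
  then obtain ds es where "sum_list ds = s" "abs ` set ds \<subseteq> abs ` S"
    "sum_list es = t" "abs ` set es \<subseteq> abs ` S" by blast
  then show ?case
    by (intro exI[of _ "ds @ map uminus es"])
      (auto simp: sum_list_negate image_image)
qed

text \<open>A relatively prime set A admits a step list with sum -1 whose absolute values are
  exactly the elements of A (Bezout plus the padding a, -a for every a \<in> A).\<close>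
lemma rel_prime_step_list:
  assumes "finite A" "rel_prime_set A"
  shows "\<exists>ds. sum_list ds = -1 \<and> abs ` set ds = int ` A"
proof -
  have "Gcd A = 1" using assms(2) unfolding rel_prime_set_def by auto
  then have "1 \<in> group_closure (int ` A)"
    using Gcd_in_group_closure[of "int ` A"] by simp
  from group_closure_signed_sum[OF this] obtain es
    where es: "sum_list es = 1" "abs ` set es \<subseteq> abs ` int ` A" by blast
  have es_A: "abs ` set es \<subseteq> int ` A"
    using es(2) by (simp add: image_image)
  define as where "as = map int (sorted_list_of_set A)"
  have as: "set as = int ` A" "abs ` set as = int ` A"
    unfolding as_def using assms(1) by (simp_all add: image_image)
  define ds where "ds = map uminus es @ as @ map uminus as"
  have "sum_list ds = -1"
    unfolding ds_def using es(1) by (simp add: sum_list_negate)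
  moreover have "abs ` set ds = abs ` set es \<union> int ` A"
    unfolding ds_def using as by (simp add: image_Un image_image)
  ultimately show ?thesis using es_A by blast
qed

theorem mainTheorem4:
  fixes A :: "nat set"
  assumes "finite A" and "\<forall>a\<in>A. a > 0" and "rel_prime_set A"
  shows "\<exists>K. N_set K \<and> A = {n::nat. n > 0 \<and> real n \<in> diff_set K}"
proof -
  obtain ds where sum: "sum_list ds = -1" and steps: "abs ` set ds = int ` A"
    using rel_prime_step_list[OF assms(1,3)] by blast
  have "ds \<noteq> []" using sum by auto
  then have "N_set (staircase ds)" by (rule staircase_N_set)
  have "real n \<in> diff_set (staircase ds) \<longleftrightarrow> n \<in> A" if "n > 0" for n
    using staircase_positive_diffs[OF sum that] steps by (simp add: image_iff)
  then have "A = {n. n > 0 \<and> real n \<in> diff_set (staircase ds)}"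
    using assms(2) by blast
  with \<open>N_set (staircase ds)\<close> show ?thesis by blast
qed

end
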